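(* Let $n\ge2$, $p\in(0,1)$, $r:=p^2+(1-p)^2$, and let $R$ be any fixed set of $k$ vertices of $\{1,\dots,n\}$ with $k\ge\frac{-3\ln n}{\ln r}$. Then $R$ is a resolving set of $G_{n,p}$ with probability at least $1-\frac{1}{2n}$. In particular, $\beta(G_{n,p})\le\big\lceil\frac{-3\ln n}{\ln r}\big\rceil$ with probability tending to $1$ as $n\to\infty$.
   Context: $G_{n,p}$ is the Erdős–Rényi random graph on vertex set $\{1,\dots,n\}$ in which each pair of distinct vertices is adjacent independently with probability $p$. A set $R$ of vertices of a graph $G$ is resolving if for all distinct vertices $u,v$ there is $w\in R$ with $d(u,w)\ne d(v,w)$, where $d$ is shortest-path distance ($\infty$ between different components). $\beta(G)$ is the minimum size of a resolving set. *)

theory Defs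
  imports Complex_Main "HOL-Library.Extended_Nat"
begin

text \<open>Vertex set {1..n}; a graph on it is a set of edges, each a 2-element set {u,v}.\<close>

definition all_pairs :: "nat \<Rightarrow> nat set set" where
  "all_pairs n = {e. \<exists>u v. u \<in> {1..n} \<and> v \<in> {1..n} \<and> u \<noteq> v \<and> e = {u, v}}"

text \<open>Probability under G(n,p) of the event P (a predicate on edge sets):
  each pair is an edge independently with probability p.\<close>
definition gnp_prob :: "nat \<Rightarrow> real \<Rightarrow> (nat set set \<Rightarrow> bool) \<Rightarrow> real" where
  "gnp_prob n p P = (\<Sum>E\<in>{E. E \<subseteq> all_pairs n \<and> P E}.
      p ^ card E * (1 - p) ^ (card (all_pairs n) - card E))"

definition adj_rel :: "nat set set \<Rightarrow> (nat \<times> nat) set" where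
  "adj_rel E = {(u, v). u \<noteq> v \<and> {u, v} \<in> E}"

definition gdist :: "nat set set \<Rightarrow> nat \<Rightarrow> nat \<Rightarrow> enat" where
  "gdist E u v = (if \<exists>k. (u, v) \<in> (adj_rel E) ^^ k
                  then enat (LEAST k. (u, v) \<in> (adj_rel E) ^^ k) else \<infinity>)"

definition resolving :: "nat \<Rightarrow> nat set set \<Rightarrow> nat set \<Rightarrow> bool" where
  "resolving n E R \<longleftrightarrow> R \<subseteq> {1..n} \<and>
     (\<forall>u\<in>{1..n}. \<forall>v\<in>{1..n}. u \<noteq> v \<longrightarrow> (\<exists>w\<in>R. gdist E u w \<noteq> gdist E v w))"

definition metric_dim :: "nat \<Rightarrow> nat set set \<Rightarrow> nat" where
  "metric_dim n E = (LEAST k. \<exists>R. resolving n E R \<and> card R = k)"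

end

theory Submission
  imports Defs
begin

text \<open>Two vertices outside \<open>R\<close> fail to be resolved by \<open>R\<close> only if, for every \<open>w \<in> R\<close>,
  they are both adjacent or both non-adjacent to \<open>w\<close>. For distinct \<open>w\<close> these events concern
  disjoint pairs of edges, so they are independent, each of probability \<open>r = p\<^sup>2 + (1 - p)\<^sup>2\<close>,
  and together they have probability \<open>r\<^sup>k \<le> 1/n\<^sup>3\<close>. A union bound over the at most
  \<open>n\<^sup>2/2\<close> pairs gives failure probability at most \<open>1/(2n)\<close>; vertices of \<open>R\<close> are resolved by
  themselves at distance \<open>0\<close>. For the metric dimension take \<open>R = {1..\<lceil>-3 ln n / ln r\<rceil>}\<close>,
  which fits into \<open>{1..n}\<close> for large \<open>n\<close>.\<close>

definition subset_prob :: "'a set \<Rightarrow> real \<Rightarrow> ('a set \<Rightarrow> bool) \<Rightarrow> real" where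
  "subset_prob A p P =
     (\<Sum>E\<in>Pow A. if P E then p ^ card E * (1 - p) ^ (card A - card E) else 0)"

lemma finite_all_pairs: "finite (all_pairs n)"
  by (rule finite_subset[of _ "Pow {1..n}"]) (auto simp: all_pairs_def)

lemma gnp_prob_eq_subset_prob: "gnp_prob n p P = subset_prob (all_pairs n) p P"
  unfolding gnp_prob_def subset_prob_def
  by (subst sum.inter_filter[symmetric]) (auto intro: sum.cong simp: finite_all_pairs)

lemma subset_prob_cong:
  "(\<And>E. E \<subseteq> A \<Longrightarrow> P E = Q E) \<Longrightarrow> subset_prob A p P = subset_prob A p Q"
  unfolding subset_prob_def by (rule sum.cong) auto

lemma subset_prob_empty: "subset_prob {} p P = (if P {} then 1 else 0)"
  by (simp add: subset_prob_def)

lemma subset_prob_False: "subset_prob A p (\<lambda>_. False) = 0"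
  by (simp add: subset_prob_def)

lemma subset_prob_insert:
  assumes "finite A" "a \<notin> A"
  shows "subset_prob (insert a A) p P
           = p * subset_prob A p (\<lambda>E. P (insert a E)) + (1 - p) * subset_prob A p P"
proof -
  define g where "g E = (if P E then p ^ card E * (1 - p) ^ (Suc (card A) - card E) else 0)" for E
  have E: "card E \<le> card A" "finite E" "a \<notin> E" if "E \<subseteq> A" for E
    using that assms card_mono finite_subset by auto
  have "subset_prob (insert a A) p P = sum g (Pow A) + sum g (insert a ` Pow A)"
    unfolding subset_prob_def Pow_insert g_def card.insert[OF assms]
    by (rule sum.union_disjoint) (use assms in auto)
  also have "sum g (insert a ` Pow A) = sum (g \<circ> insert a) (Pow A)"
    using assms by (intro sum.reindex inj_onI) (auto simp: E insert_ident)
  also have "sum (g \<circ> insert a) (Pow A) = p * subset_prob A p (\<lambda>E. P (insert a E))"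
    unfolding subset_prob_def sum_distrib_left
    by (intro sum.cong refl) (auto simp: g_def E Suc_diff_le)
  also have "sum g (Pow A) = (1 - p) * subset_prob A p P"
    unfolding subset_prob_def sum_distrib_left
    by (intro sum.cong refl) (auto simp: g_def E Suc_diff_le)
  finally show ?thesis by simp
qed

lemma subset_prob_True: "finite A \<Longrightarrow> subset_prob A p (\<lambda>_. True) = 1"
  by (induction A rule: finite_induct) (simp_all add: subset_prob_empty subset_prob_insert)

lemma subset_prob_mono:
  assumes "0 \<le> p" "p \<le> 1" "\<And>E. E \<subseteq> A \<Longrightarrow> P E \<Longrightarrow> Q E"
  shows "subset_prob A p P \<le> subset_prob A p Q"
  unfolding subset_prob_def using assms by (intro sum_mono) auto

lemma subset_prob_le_1: "0 \<le> p \<Longrightarrow> p \<le> 1 \<Longrightarrow> finite A \<Longrightarrow> subset_prob A p P \<le> 1"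
  using subset_prob_mono[of p A P "\<lambda>_. True"] subset_prob_True[of A p] by simp

lemma subset_prob_compl:
  "finite A \<Longrightarrow> subset_prob A p (\<lambda>E. \<not> P E) = 1 - subset_prob A p P"
  using subset_prob_True[of A p] unfolding subset_prob_def
  by (simp add: sum.distrib[symmetric] if_distrib eq_diff_eq cong: if_cong)

lemma subset_prob_Ex_le:
  fixes A :: "'a set"
  assumes "0 \<le> p" "p \<le> 1" "finite I"
  shows "subset_prob A p (\<lambda>E. \<exists>i\<in>I. P i E) \<le> (\<Sum>i\<in>I. subset_prob A p (P i))"
  unfolding subset_prob_def
proof (subst sum.swap, intro sum_mono)
  fix E :: "'a set"
  let ?w = "p ^ card E * (1 - p) ^ (card A - card E)"
  have w: "0 \<le> ?w" using assms by simp
  show "(if \<exists>i\<in>I. P i E then ?w else 0) \<le> (\<Sum>i\<in>I. if P i E then ?w else 0)"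
  proof (cases "\<exists>i\<in>I. P i E")
    case True
    then obtain i where "i \<in> I" "P i E" by blast
    then have "?w \<le> (if P i E then ?w else 0)" by simp
    also have "\<dots> \<le> (\<Sum>i\<in>I. if P i E then ?w else 0)"
      using \<open>i \<in> I\<close> assms(3) w by (intro member_le_sum) auto
    finally show ?thesis using True by simp
  qed (use w in \<open>auto intro: sum_nonneg\<close>)
qed

lemma subset_prob_Un_irrelevant:
  assumes "finite B" "finite C" "B \<inter> C = {}" "\<And>c E. c \<in> C \<Longrightarrow> P (insert c E) = P E"
  shows "subset_prob (B \<union> C) p P = subset_prob B p P"
  using assms(2-4)
proof (induction C rule: finite_induct)
  case (insert c C)
  then have "subset_prob (B \<union> insert c C) p P
               = p * subset_prob (B \<union> C) p P + (1 - p) * subset_prob (B \<union> C) p P"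
    using assms(1) by (simp add: subset_prob_insert)
  then show ?case using insert by (simp add: algebra_simps)
qed simp

definition same_nbrs :: "nat set \<Rightarrow> nat \<Rightarrow> nat \<Rightarrow> nat set set \<Rightarrow> bool" where
  "same_nbrs W u v E \<longleftrightarrow> (\<forall>w\<in>W. {u, w} \<in> E \<longleftrightarrow> {v, w} \<in> E)"

definition link_edges :: "nat \<Rightarrow> nat \<Rightarrow> nat set \<Rightarrow> nat set set" where
  "link_edges u v W = (\<lambda>w. {u, w}) ` W \<union> (\<lambda>w. {v, w}) ` W"

lemma same_nbrs_insert_irrelevant:
  "e \<notin> link_edges u v W \<Longrightarrow> same_nbrs W u v (insert e E) = same_nbrs W u v E"
  unfolding same_nbrs_def link_edges_def by auto

text \<open>Each \<open>w \<in> W\<close> contributes an independent factor: the edges \<open>uw\<close> and \<open>vw\<close> are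
  both present or both absent.\<close>

lemma subset_prob_same_nbrs:
  assumes "u \<noteq> v" "finite W" "u \<notin> W" "v \<notin> W"
  shows "subset_prob (link_edges u v W) p (same_nbrs W u v) = (p\<^sup>2 + (1 - p)\<^sup>2) ^ card W"
  using assms(2-4)
proof (induction W rule: finite_induct)
  case empty
  then show ?case by (simp add: link_edges_def same_nbrs_def subset_prob_empty)
next
  case (insert w W)
  let ?a = "{u, w}" and ?b = "{v, w}" and ?L = "link_edges u v W"
  have fresh: "?a \<notin> insert ?b ?L" "?b \<notin> ?L"
    using \<open>w \<notin> W\<close> insert.prems assms(1)
    by (fastforce simp: link_edges_def doubleton_eq_iff)+
  have L: "link_edges u v (insert w W) = insert ?a (insert ?b ?L)"
    by (auto simp: link_edges_def)
  have split: "same_nbrs (insert w W) u v E \<longleftrightarrow> (?a \<in> E \<longleftrightarrow> ?b \<in> E) \<and> same_nbrs W u v E" for E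
    unfolding same_nbrs_def by blast
  have irr: "same_nbrs W u v (insert ?a E) = same_nbrs W u v E"
             "same_nbrs W u v (insert ?b E) = same_nbrs W u v E" for E
    using fresh by (simp_all add: same_nbrs_insert_irrelevant)
  have notin: "?a \<notin> E" "?b \<notin> E" if "E \<subseteq> ?L" for E
    using that fresh by auto
  have "subset_prob ?L p (\<lambda>E. same_nbrs (insert w W) u v (insert ?a (insert ?b E)))
          = subset_prob ?L p (same_nbrs W u v)"
       "subset_prob ?L p (same_nbrs (insert w W) u v) = subset_prob ?L p (same_nbrs W u v)"
    by (intro subset_prob_cong; simp add: split irr notin)+
  moreover have "subset_prob ?L p (\<lambda>E. same_nbrs (insert w W) u v (insert ?a E))
                  = subset_prob ?L p (\<lambda>_. False)"
                "subset_prob ?L p (\<lambda>E. same_nbrs (insert w W) u v (insert ?b E))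
                  = subset_prob ?L p (\<lambda>_. False)"
    using fresh by (intro subset_prob_cong; force simp: split notin)+
  moreover have "finite ?L" "finite (insert ?b ?L)"
    using \<open>finite W\<close> by (simp_all add: link_edges_def)
  ultimately show ?case
    using insert fresh
    by (simp add: L subset_prob_insert subset_prob_False power2_eq_square algebra_simps)
qed

lemma gdist_eq_enat_iff:
  "gdist E u v = enat k \<longleftrightarrow> (u, v) \<in> adj_rel E ^^ k \<and> (\<forall>j<k. (u, v) \<notin> adj_rel E ^^ j)"
  unfolding gdist_def
  by (auto intro!: Least_equality intro: LeastI dest: not_less_Least simp: leI not_less[symmetric])

lemma gdist_eq_0_iff: "gdist E u v = 0 \<longleftrightarrow> u = v"
  using gdist_eq_enat_iff[of E u v 0] by (simp add: zero_enat_def)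

lemma gdist_eq_1_iff: "gdist E u v = 1 \<longleftrightarrow> u \<noteq> v \<and> {u, v} \<in> E"
  using gdist_eq_enat_iff[of E u v 1] by (auto simp: one_enat_def adj_rel_def)

lemma resolving_if_no_same_nbrs:
  assumes "R \<subseteq> {1..n}"
    and "\<And>u v. u \<in> {1..n} - R \<Longrightarrow> v \<in> {1..n} - R \<Longrightarrow> u < v \<Longrightarrow> \<not> same_nbrs R u v E"
  shows "resolving n E R"
  unfolding resolving_def
proof (intro conjI assms(1) ballI impI)
  fix u v assume uv: "u \<in> {1..n}" "v \<in> {1..n}" "u \<noteq> v"
  show "\<exists>w\<in>R. gdist E u w \<noteq> gdist E v w"
  proof (cases "u \<in> R \<or> v \<in> R")
    case True
    then show ?thesis using uv(3) by (metis gdist_eq_0_iff)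
  next
    case False
    have "same_nbrs R u v E \<longleftrightarrow> same_nbrs R v u E"
      unfolding same_nbrs_def by blast
    then have "\<not> same_nbrs R u v E"
      using assms(2) False uv by (cases "u < v") (auto simp: neq_iff)
    then obtain w where "w \<in> R" "{u, w} \<in> E \<longleftrightarrow> {v, w} \<notin> E"
      unfolding same_nbrs_def by blast
    moreover have "u \<noteq> w" "v \<noteq> w" using \<open>w \<in> R\<close> False by auto
    ultimately show ?thesis by (metis gdist_eq_1_iff)
  qed
qed

lemma subset_prob_all_pairs_same_nbrs:
  assumes "R \<subseteq> {1..n}" "u \<in> {1..n} - R" "v \<in> {1..n} - R" "u \<noteq> v"
  shows "subset_prob (all_pairs n) p (same_nbrs R u v) = (p\<^sup>2 + (1 - p)\<^sup>2) ^ card R"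
proof -
  have "finite R" using assms(1) finite_subset by blast
  have "link_edges u v R \<subseteq> all_pairs n"
    using assms unfolding link_edges_def all_pairs_def by blast
  then have "all_pairs n = link_edges u v R \<union> (all_pairs n - link_edges u v R)" by blast
  also have "subset_prob \<dots> p (same_nbrs R u v) = subset_prob (link_edges u v R) p (same_nbrs R u v)"
    using \<open>finite R\<close> finite_all_pairs
    by (intro subset_prob_Un_irrelevant) (auto simp: link_edges_def same_nbrs_insert_irrelevant)
  also have "\<dots> = (p\<^sup>2 + (1 - p)\<^sup>2) ^ card R"
    using \<open>finite R\<close> assms by (intro subset_prob_same_nbrs) auto
  finally show ?thesis .
qed

lemma card_less_pairs_le:
  fixes S :: "'a :: linorder set"
  assumes "finite S"
  shows "2 * card {(u, v). u \<in> S \<and> v \<in> S \<and> u < v} \<le> card S * card S"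
proof -
  let ?P = "{(u, v). u \<in> S \<and> v \<in> S \<and> u < v}"
  have "finite ?P" by (rule finite_subset[of _ "S \<times> S"]) (use assms in auto)
  then have "card (?P \<union> prod.swap ` ?P) = card ?P + card (prod.swap ` ?P)"
    by (intro card_Un_disjoint) auto
  also have "card (prod.swap ` ?P) = card ?P" by (simp add: card_image)
  finally have "2 * card ?P = card (?P \<union> prod.swap ` ?P)" by simp
  also have "\<dots> \<le> card (S \<times> S)" using assms by (intro card_mono) auto
  finally show ?thesis by (simp add: card_cartesian_product)
qed

lemma prob_not_resolving_le:
  assumes "0 \<le> p" "p \<le> 1" "R \<subseteq> {1..n}"
  shows "subset_prob (all_pairs n) p (\<lambda>E. \<not> resolving n E R)
           \<le> real n ^ 2 / 2 * (p\<^sup>2 + (1 - p)\<^sup>2) ^ card R"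
proof -
  define S where "S = {1..n} - R"
  define Pairs where "Pairs = {(u, v). u \<in> S \<and> v \<in> S \<and> u < v}"
  have "finite Pairs" unfolding Pairs_def S_def
    by (rule finite_subset[of _ "{1..n} \<times> {1..n}"]) auto
  have "card S \<le> n" using card_mono[of "{1..n}" S] unfolding S_def by auto
  then have "2 * card Pairs \<le> n * n"
    using card_less_pairs_le[of S] unfolding Pairs_def S_def
    by (meson finite_Diff finite_atLeastAtMost mult_le_mono order_trans)
  then have card_Pairs: "real (card Pairs) \<le> real n ^ 2 / 2"
    by (simp add: power2_eq_square flip: of_nat_mult)
  have "subset_prob (all_pairs n) p (\<lambda>E. \<not> resolving n E R)
          \<le> subset_prob (all_pairs n) p (\<lambda>E. \<exists>(u, v)\<in>Pairs. same_nbrs R u v E)"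
  proof (intro subset_prob_mono assms(1,2))
    fix E assume "\<not> resolving n E R"
    then show "\<exists>(u, v)\<in>Pairs. same_nbrs R u v E"
      using resolving_if_no_same_nbrs[OF assms(3)] unfolding Pairs_def S_def by blast
  qed
  also have "\<dots> \<le> (\<Sum>(u, v)\<in>Pairs. subset_prob (all_pairs n) p (same_nbrs R u v))"
    using subset_prob_Ex_le[OF assms(1,2) \<open>finite Pairs\<close>, of _ "\<lambda>(u, v). same_nbrs R u v"]
    by (simp add: case_prod_beta)
  also have "\<dots> = real (card Pairs) * (p\<^sup>2 + (1 - p)\<^sup>2) ^ card R"
    using assms(3) by (simp add: Pairs_def S_def subset_prob_all_pairs_same_nbrs case_prod_beta)
  also have "\<dots> \<le> real n ^ 2 / 2 * (p\<^sup>2 + (1 - p)\<^sup>2) ^ card R"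
    using card_Pairs by (intro mult_right_mono) auto
  finally show ?thesis .
qed

lemma sq_plus_one_minus_sq_bounds:
  fixes p :: real
  assumes "0 < p" "p < 1"
  shows "0 < p\<^sup>2 + (1 - p)\<^sup>2" "p\<^sup>2 + (1 - p)\<^sup>2 < 1"
proof -
  show "0 < p\<^sup>2 + (1 - p)\<^sup>2" using assms by (simp add: add_pos_nonneg)
  have "p\<^sup>2 + (1 - p)\<^sup>2 = 1 - 2 * (p * (1 - p))" by (simp add: power2_eq_square algebra_simps)
  moreover have "0 < p * (1 - p)" using assms by simp
  ultimately show "p\<^sup>2 + (1 - p)\<^sup>2 < 1" by linarith
qed

lemma power_le_if_ge_log_ratio:
  fixes r x :: real
  assumes "0 < r" "r < 1" "0 < x" "ln x / ln r \<le> real k"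
  shows "r ^ k \<le> x"
proof -
  have "ln r < 0" using assms by simp
  then have "real k * ln r \<le> ln x"
    using mult_right_mono_neg[OF assms(4), of "ln r"] by simp
  then show ?thesis
    using assms by (simp add: ln_realpow[symmetric] del: ln_realpow)
qed

theorem gnp_prob_resolving_ge:
  fixes p :: real
  assumes "0 < p" "p < 1" "0 < n" "R \<subseteq> {1..n}"
    and "- 3 * ln (real n) / ln (p\<^sup>2 + (1 - p)\<^sup>2) \<le> real (card R)"
  shows "1 - 1 / (2 * real n) \<le> gnp_prob n p (\<lambda>E. resolving n E R)"
proof -
  have "ln (1 / real n ^ 3) = - 3 * ln (real n)"
    using assms(3) by (simp add: ln_div ln_realpow)
  then have "(p\<^sup>2 + (1 - p)\<^sup>2) ^ card R \<le> 1 / real n ^ 3"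
    using assms(3,5) sq_plus_one_minus_sq_bounds[OF assms(1,2)]
    by (intro power_le_if_ge_log_ratio) simp_all
  then have "real n ^ 2 / 2 * (p\<^sup>2 + (1 - p)\<^sup>2) ^ card R \<le> real n ^ 2 / 2 * (1 / real n ^ 3)"
    by (rule mult_left_mono) simp
  moreover have "subset_prob (all_pairs n) p (\<lambda>E. \<not> resolving n E R)
                   \<le> real n ^ 2 / 2 * (p\<^sup>2 + (1 - p)\<^sup>2) ^ card R"
    using assms by (intro prob_not_resolving_le) auto
  ultimately have "subset_prob (all_pairs n) p (\<lambda>E. \<not> resolving n E R)
                     \<le> real n ^ 2 / 2 * (1 / real n ^ 3)"
    by linarith
  also have "\<dots> = 1 / (2 * real n)" using assms(3) by (simp add: power2_eq_square power3_eq_cube)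
  finally show ?thesis
    using subset_prob_compl[OF finite_all_pairs, of n p "\<lambda>E. \<not> resolving n E R"]
    by (simp add: gnp_prob_eq_subset_prob)
qed

lemma metric_dim_le_card: "resolving n E R \<Longrightarrow> metric_dim n E \<le> card R"
  unfolding metric_dim_def by (intro Least_le) auto

lemma gnp_prob_metric_dim_ge:
  fixes p :: real and n :: nat
  defines "f \<equiv> - 3 * ln (real n) / ln (p\<^sup>2 + (1 - p)\<^sup>2)"
  assumes "0 < p" "p < 1" "0 < n" "f \<le> real n"
  shows "1 - 1 / (2 * real n) \<le> gnp_prob n p (\<lambda>E. real (metric_dim n E) \<le> of_int \<lceil>f\<rceil>)"
proof -
  have "ln (p\<^sup>2 + (1 - p)\<^sup>2) < 0"
    using sq_plus_one_minus_sq_bounds[OF assms(2,3)] by simp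
  moreover have "0 \<le> ln (real n)" using assms(4) by simp
  ultimately have "0 \<le> f" unfolding f_def by (simp add: divide_nonneg_neg)
  define K where "K = nat \<lceil>f\<rceil>"
  have K: "real K = of_int \<lceil>f\<rceil>" using \<open>0 \<le> f\<close> by (simp add: K_def)
  have "\<lceil>f\<rceil> \<le> int n" using assms(5) by (simp add: ceiling_le_iff)
  then have "{1..K} \<subseteq> {1..n}" by (simp add: K_def nat_le_iff)
  moreover have "f \<le> real (card {1..K})" using K by simp
  ultimately have "1 - 1 / (2 * real n) \<le> gnp_prob n p (\<lambda>E. resolving n E {1..K})"
    unfolding f_def by (rule gnp_prob_resolving_ge[OF assms(2-4)])
  also have "\<dots> \<le> gnp_prob n p (\<lambda>E. real (metric_dim n E) \<le> of_int \<lceil>f\<rceil>)"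
    unfolding gnp_prob_eq_subset_prob
  proof (rule subset_prob_mono)
    fix E assume "resolving n E {1..K}"
    then have "metric_dim n E \<le> K" using metric_dim_le_card by fastforce
    then show "real (metric_dim n E) \<le> of_int \<lceil>f\<rceil>" using K by linarith
  qed (use assms(2,3) in auto)
  finally show ?thesis .
qed

lemma eventually_const_mult_ln_le:
  fixes c :: real
  shows "eventually (\<lambda>n. c * ln (real n) \<le> real n) sequentially"
proof -
  have "(\<lambda>n. c * (ln (real n) / real n)) \<longlonglongrightarrow> c * 0"
    by (intro tendsto_mult tendsto_const
          filterlim_compose[OF ln_x_over_x_tendsto_0 filterlim_real_sequentially])
  then have "eventually (\<lambda>n. c * (ln (real n) / real n) < 1) sequentially"
    by (intro order_tendstoD(2)) auto
  then show ?thesis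
    using eventually_gt_at_top[of "0::nat"]
    by eventually_elim (auto simp: pos_divide_less_eq)
qed

theorem corollary4p4:
  fixes p :: real
  assumes "0 < p" "p < 1"
  shows "(\<forall>n::nat. \<forall>R::nat set. n \<ge> 2 \<longrightarrow> R \<subseteq> {1..n} \<longrightarrow>
            real (card R) \<ge> - 3 * ln (real n) / ln (p\<^sup>2 + (1 - p)\<^sup>2) \<longrightarrow>
            gnp_prob n p (\<lambda>E. resolving n E R) \<ge> 1 - 1 / (2 * real n))
       \<and> ((\<lambda>n. gnp_prob n p (\<lambda>E. real (metric_dim n E)
              \<le> real_of_int \<lceil>- 3 * ln (real n) / ln (p\<^sup>2 + (1 - p)\<^sup>2)\<rceil>)) \<longlonglongrightarrow> 1)"
proof (intro conjI allI impI)
  fix n :: nat and R :: "nat set"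
  assume "n \<ge> 2" "R \<subseteq> {1..n}" "real (card R) \<ge> - 3 * ln (real n) / ln (p\<^sup>2 + (1 - p)\<^sup>2)"
  then show "gnp_prob n p (\<lambda>E. resolving n E R) \<ge> 1 - 1 / (2 * real n)"
    by (intro gnp_prob_resolving_ge[OF assms]) simp_all
next
  let ?P = "\<lambda>n. gnp_prob n p (\<lambda>E. real (metric_dim n E)
              \<le> real_of_int \<lceil>- 3 * ln (real n) / ln (p\<^sup>2 + (1 - p)\<^sup>2)\<rceil>)"
  have "eventually (\<lambda>n. 1 - 1 / (2 * real n) \<le> ?P n) sequentially"
    using eventually_const_mult_ln_le[of "- 3 / ln (p\<^sup>2 + (1 - p)\<^sup>2)"] eventually_gt_at_top[of "0::nat"]
  proof eventually_elim
    case (elim n)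
    have "- 3 * ln (real n) / ln (p\<^sup>2 + (1 - p)\<^sup>2) \<le> real n"
      using elim(1) by (simp add: mult.commute)
    then show ?case by (rule gnp_prob_metric_dim_ge[OF assms elim(2)])
  qed
  moreover have "eventually (\<lambda>n. ?P n \<le> 1) sequentially"
    unfolding gnp_prob_eq_subset_prob using assms
    by (intro always_eventually allI subset_prob_le_1 finite_all_pairs) auto
  moreover have "(\<lambda>n. 1 - 1 / (2 * real n)) \<longlonglongrightarrow> 1"
    using tendsto_diff[OF tendsto_const lim_const_over_n[of "1 / 2"], of 1] by simp
  ultimately show "?P \<longlonglongrightarrow> 1"
    by (rule tendsto_sandwich[OF _ _ _ tendsto_const])
qed

end
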